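(* Let $d\in\mathbb N$, $l\in\mathbb Z_+^d$, $\rho,\sigma\in(0,\infty)^d$. There is a constant $c=c(d,l,\rho,\sigma)>0$ such that for all $x^0,y^0,X^0\in\mathbb R^d$ and $\delta,\eta,\Delta\in(0,\infty)^d$ with $$x^0+\sigma\delta I^d\subset y^0+\eta I^d\subset(y^0+\rho\delta I^d)\cap(X^0+\Delta I^d),$$ every $J\subset\{1,\dots,d\}$, every family of functions $\chi^j$ ($j\in J$) continuous on $\mathbb R$ with compact support and $\chi^j=1$ on $X^0_j+\Delta_jI$, and every $f\in C_0(\mathbb R^d)$, $$\Bigl\|\Bigl(\prod_{j\in J}V_j(E-M_{\chi^j}\mathcal P^{1,l_j}_{\sigma_j\delta_j,x^0_j})\Bigr)f\Bigr\|_{L_\infty(G)}\le c\|f\|_{L_\infty(G)},\qquad G=y^0+\eta I^d.$$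
   Context: $I=(0,1)$, $I^d=(0,1)^d$, products componentwise. For each $k\in\mathbb Z_+$ fixed distinct points $\xi^{k,0},\dots,\xi^{k,k}\in(0,1)$ are chosen; for $a\in\mathbb R$, $\delta>0$ and $g$ continuous on $(a,a+\delta)$, $\mathcal P^{1,k}_{\delta,a}g$ is the polynomial of degree $\le k$ interpolating $g$ at $a+\delta\xi^{k,\mu}$, $\mu=0,\dots,k$. $E$ is the identity and $E-M_\chi\mathcal P^{1,k}_{\delta,a}$ is the bounded operator on $C_0(\mathbb R)$, $g\mapsto g-\chi\cdot\mathcal P^{1,k}_{\delta,a}(g|_{(a,a+\delta)})$. $C_0(\mathbb R^d)$: continuous functions vanishing at infinity. For a bounded operator $T$ on $C_0(\mathbb R)$, $V_j(T)$ is the unique bounded operator on $C_0(\mathbb R^d)$ with $(V_j(T)f)(x)=(T(f(x_1,\dots,x_{j-1},\cdot,x_{j+1},\dots,x_d)))(x_j)$; these commute for different $j$. *)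

theory Defs
  imports "HOL-Analysis.Analysis" "HOL-Computational_Algebra.Polynomial"
begin

definition obox :: "real^'n \<Rightarrow> real^'n \<Rightarrow> (real^'n) set" where
  "obox a h = {x. \<forall>i. a$i < x$i \<and> x$i < a$i + h$i}"

definition cmul :: "real^'n \<Rightarrow> real^'n \<Rightarrow> real^'n" where
  "cmul a b = (\<chi> i. a$i * b$i)"

definition interp_poly ::
  "(nat \<Rightarrow> nat \<Rightarrow> real) \<Rightarrow> nat \<Rightarrow> real \<Rightarrow> real \<Rightarrow> (real \<Rightarrow> real) \<Rightarrow> real poly" where
  "interp_poly \<xi> k \<delta> a g =
     (THE p. degree p \<le> k \<and> (\<forall>\<mu>\<le>k. poly p (a + \<delta> * \<xi> k \<mu>) = g (a + \<delta> * \<xi> k \<mu>)))"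

definition E_minus_MP ::
  "(nat \<Rightarrow> nat \<Rightarrow> real) \<Rightarrow> (real \<Rightarrow> real) \<Rightarrow> nat \<Rightarrow> real \<Rightarrow> real
    \<Rightarrow> (real \<Rightarrow> real) \<Rightarrow> (real \<Rightarrow> real)" where
  "E_minus_MP \<xi> cf k \<delta> a g = (\<lambda>t. g t - cf t * poly (interp_poly \<xi> k \<delta> a g) t)"

definition Vop :: "'n \<Rightarrow> ((real \<Rightarrow> real) \<Rightarrow> (real \<Rightarrow> real))
    \<Rightarrow> (real^'n \<Rightarrow> real) \<Rightarrow> (real^'n \<Rightarrow> real)" where
  "Vop j T f = (\<lambda>x. T (\<lambda>s. f (\<chi> i. if i = j then s else x$i)) (x$j))"

text \<open>Product (composition) of V_j(T_j) over j in J; the factors commute, the order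
  is fixed by an arbitrary enumeration of J.\<close>
definition Vprod :: "'n set \<Rightarrow> ('n \<Rightarrow> ((real \<Rightarrow> real) \<Rightarrow> (real \<Rightarrow> real)))
    \<Rightarrow> (real^'n \<Rightarrow> real) \<Rightarrow> (real^'n \<Rightarrow> real)" where
  "Vprod J T = foldr (\<lambda>j acc. Vop j (T j) \<circ> acc) (SOME js. distinct js \<and> set js = J) id"

definition C0 :: "(real^'n \<Rightarrow> real) set" where
  "C0 = {f. continuous_on UNIV f \<and> (f \<longlongrightarrow> 0) at_infinity}"

text \<open>Sup norm over G (equal to the L_infinity(G) norm for continuous functions on open G).\<close>
definition supG :: "(real^'n) set \<Rightarrow> (real^'n \<Rightarrow> real) \<Rightarrow> ereal" where
  "supG G f = (SUP x\<in>G. ereal \<bar>f x\<bar>)"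

end

theory Submission imports Defs begin

(* On G = y0 + \<eta> I^d every factor V_j(E - M_\<chi> P) is local. Its interpolation nodes
   x0_j + \<sigma>_j \<delta>_j \<xi> lie in the j-th side of G and \<chi>^j = 1 there, so on G it acts as
   g \<mapsto> g - P g and only reads values of g on G. As \<eta>_j \<le> \<rho>_j \<delta>_j = (\<rho>_j / \<sigma>_j) (\<sigma>_j \<delta>_j),
   every point of G lies within (\<rho>_j / \<sigma>_j) times the node scale of each node, so the
   Lagrange basis polynomials are bounded on G by a constant depending only on \<xi>, l_j and
   \<rho>_j / \<sigma>_j. Hence each factor multiplies the supremum over G by at most a fixed C, and the
   product by at most C^d. *)

definition lagrange_basis :: "(nat \<Rightarrow> real) \<Rightarrow> nat \<Rightarrow> nat \<Rightarrow> real poly" where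
  "lagrange_basis z k \<mu> = (\<Prod>\<nu>\<in>{..k}-{\<mu>}. smult (1 / (z \<mu> - z \<nu>)) [:- z \<nu>, 1:])"

lemma poly_lagrange_basis:
  "poly (lagrange_basis z k \<mu>) t = (\<Prod>\<nu>\<in>{..k}-{\<mu>}. (t - z \<nu>) / (z \<mu> - z \<nu>))"
  unfolding lagrange_basis_def poly_prod by (intro prod.cong) (auto simp: diff_divide_distrib)

lemma degree_lagrange_basis_le:
  assumes "\<mu> \<le> k"
  shows "degree (lagrange_basis z k \<mu>) \<le> k"
proof -
  have "degree (lagrange_basis z k \<mu>)
      \<le> sum (degree \<circ> (\<lambda>\<nu>. smult (1 / (z \<mu> - z \<nu>)) [:- z \<nu>, 1:])) ({..k}-{\<mu>})"
    unfolding lagrange_basis_def by (rule degree_prod_sum_le) auto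
  also have "\<dots> \<le> (\<Sum>\<nu>\<in>{..k}-{\<mu>}. 1)"
    by (intro sum_mono) (auto simp: degree_smult_le)
  also have "\<dots> = k"
    using assms by simp
  finally show ?thesis .
qed

lemma poly_lagrange_basis_node:
  assumes "inj_on z {..k}" "\<mu> \<le> k" "\<nu> \<le> k"
  shows "poly (lagrange_basis z k \<mu>) (z \<nu>) = (if \<mu> = \<nu> then 1 else 0)"
proof (cases "\<mu> = \<nu>")
  case True
  have "z \<mu> - z \<nu>' \<noteq> 0" if "\<nu>' \<in> {..k}-{\<mu>}" for \<nu>'
    using assms that inj_on_eq_iff by fastforce
  then show ?thesis
    unfolding poly_lagrange_basis using True by (auto intro: prod.neutral)
next
  case False
  then have "\<nu> \<in> {..k}-{\<mu>}"
    using assms by auto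
  then show ?thesis
    unfolding poly_lagrange_basis using False by (auto intro!: prod_zero bexI[of _ \<nu>])
qed

definition lagrange_interp :: "(nat \<Rightarrow> real) \<Rightarrow> nat \<Rightarrow> (real \<Rightarrow> real) \<Rightarrow> real poly" where
  "lagrange_interp z k g = (\<Sum>\<mu>\<le>k. smult (g (z \<mu>)) (lagrange_basis z k \<mu>))"

lemma degree_lagrange_interp_le: "degree (lagrange_interp z k g) \<le> k"
  unfolding lagrange_interp_def
  by (intro degree_sum_le) (auto intro: order.trans[OF degree_smult_le] degree_lagrange_basis_le)

lemma poly_lagrange_interp_node:
  assumes "inj_on z {..k}" "\<nu> \<le> k"
  shows "poly (lagrange_interp z k g) (z \<nu>) = g (z \<nu>)"
proof -
  have "poly (lagrange_interp z k g) (z \<nu>) = (\<Sum>\<mu>\<le>k. g (z \<mu>) * (if \<mu> = \<nu> then 1 else 0))"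
    unfolding lagrange_interp_def poly_sum using assms
    by (intro sum.cong) (auto simp: poly_lagrange_basis_node)
  also have "\<dots> = g (z \<nu>)"
    using assms(2) by (simp add: if_distrib sum.delta cong: if_cong)
  finally show ?thesis .
qed

lemma lagrange_interp_unique:
  assumes "inj_on z {..k}" "degree p \<le> k" "\<forall>\<mu>\<le>k. poly p (z \<mu>) = g (z \<mu>)"
  shows "p = lagrange_interp z k g"
proof (rule poly_eqI_degree[where A = "z ` {..k}"])
  show "poly p x = poly (lagrange_interp z k g) x" if "x \<in> z ` {..k}" for x
    using that assms(1,3) poly_lagrange_interp_node by fastforce
  show "degree p < card (z ` {..k})" "degree (lagrange_interp z k g) < card (z ` {..k})"
    using assms(2) degree_lagrange_interp_le[of z k g] card_image[OF assms(1)] by auto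
qed

lemma interp_poly_eq_lagrange_interp:
  assumes "inj_on (\<xi> k) {..k}" "\<delta> \<noteq> 0"
  shows "interp_poly \<xi> k \<delta> a g = lagrange_interp (\<lambda>\<mu>. a + \<delta> * \<xi> k \<mu>) k g"
proof -
  have inj: "inj_on (\<lambda>\<mu>. a + \<delta> * \<xi> k \<mu>) {..k}"
    using assms by (auto simp: inj_on_def)
  show ?thesis
    unfolding interp_poly_def
    by (rule the_equality)
      (use inj degree_lagrange_interp_le poly_lagrange_interp_node lagrange_interp_unique in auto)
qed

lemma abs_poly_lagrange_interp_le:
  assumes "\<forall>\<mu>\<le>k. \<bar>g (z \<mu>)\<bar> \<le> M"
  shows "\<bar>poly (lagrange_interp z k g) t\<bar>
    \<le> M * (\<Sum>\<mu>\<le>k. \<Prod>\<nu>\<in>{..k}-{\<mu>}. \<bar>t - z \<nu>\<bar> / \<bar>z \<mu> - z \<nu>\<bar>)"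
proof -
  have "\<bar>poly (lagrange_interp z k g) t\<bar>
      \<le> (\<Sum>\<mu>\<le>k. \<bar>g (z \<mu>)\<bar> * (\<Prod>\<nu>\<in>{..k}-{\<mu>}. \<bar>t - z \<nu>\<bar> / \<bar>z \<mu> - z \<nu>\<bar>))"
    unfolding lagrange_interp_def poly_sum
    by (rule order.trans[OF sum_abs]) (simp add: poly_lagrange_basis abs_mult abs_prod)
  also have "\<dots> \<le> (\<Sum>\<mu>\<le>k. M * (\<Prod>\<nu>\<in>{..k}-{\<mu>}. \<bar>t - z \<nu>\<bar> / \<bar>z \<mu> - z \<nu>\<bar>))"
    using assms by (intro sum_mono mult_right_mono prod_nonneg) auto
  finally show ?thesis
    by (simp add: sum_distrib_left)
qed

definition lagrange_norm_bound :: "(nat \<Rightarrow> nat \<Rightarrow> real) \<Rightarrow> nat \<Rightarrow> real \<Rightarrow> real" where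
  "lagrange_norm_bound \<xi> k R = (\<Sum>\<mu>\<le>k. \<Prod>\<nu>\<in>{..k}-{\<mu>}. R / \<bar>\<xi> k \<mu> - \<xi> k \<nu>\<bar>)"

lemma abs_poly_lagrange_interp_scaled_le:
  assumes \<xi>_inj: "inj_on (\<xi> k) {..k}"
    and "0 < h" "0 \<le> M"
    and g: "\<forall>\<mu>\<le>k. \<bar>g (a + h * \<xi> k \<mu>)\<bar> \<le> M"
    and t: "\<forall>\<nu>\<le>k. \<bar>t - (a + h * \<xi> k \<nu>)\<bar> \<le> R * h"
  shows "\<bar>poly (lagrange_interp (\<lambda>\<mu>. a + h * \<xi> k \<mu>) k g) t\<bar> \<le> M * lagrange_norm_bound \<xi> k R"
proof -
  define z where "z = (\<lambda>\<mu>. a + h * \<xi> k \<mu>)"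
  have factor: "\<bar>t - z \<nu>\<bar> / \<bar>z \<mu> - z \<nu>\<bar> \<le> R / \<bar>\<xi> k \<mu> - \<xi> k \<nu>\<bar>"
    if "\<mu> \<le> k" "\<nu> \<in> {..k}-{\<mu>}" for \<mu> \<nu>
  proof -
    have "\<xi> k \<mu> \<noteq> \<xi> k \<nu>"
      using \<xi>_inj that inj_on_eq_iff by fastforce
    have "\<bar>t - z \<nu>\<bar> / \<bar>z \<mu> - z \<nu>\<bar> = \<bar>t - z \<nu>\<bar> / (h * \<bar>\<xi> k \<mu> - \<xi> k \<nu>\<bar>)"
      using \<open>0 < h\<close> unfolding z_def by (simp add: abs_mult right_diff_distrib[symmetric])
    also have "\<dots> \<le> (R * h) / (h * \<bar>\<xi> k \<mu> - \<xi> k \<nu>\<bar>)"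
      using t that \<open>0 < h\<close> \<open>\<xi> k \<mu> \<noteq> \<xi> k \<nu>\<close> unfolding z_def by (intro divide_right_mono) auto
    also have "\<dots> = R / \<bar>\<xi> k \<mu> - \<xi> k \<nu>\<bar>"
      using \<open>0 < h\<close> by simp
    finally show ?thesis .
  qed
  have "\<bar>poly (lagrange_interp z k g) t\<bar>
      \<le> M * (\<Sum>\<mu>\<le>k. \<Prod>\<nu>\<in>{..k}-{\<mu>}. \<bar>t - z \<nu>\<bar> / \<bar>z \<mu> - z \<nu>\<bar>)"
    using g unfolding z_def by (intro abs_poly_lagrange_interp_le) auto
  also have "\<dots> \<le> M * lagrange_norm_bound \<xi> k R"
    unfolding lagrange_norm_bound_def using \<open>0 \<le> M\<close> factor
    by (intro mult_left_mono sum_mono prod_mono) auto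
  finally show ?thesis
    unfolding z_def .
qed

definition op_bound_on :: "'a set \<Rightarrow> real \<Rightarrow> (('a \<Rightarrow> real) \<Rightarrow> ('a \<Rightarrow> real)) \<Rightarrow> bool" where
  "op_bound_on G C A \<longleftrightarrow>
     (\<forall>h M. 0 \<le> M \<longrightarrow> (\<forall>x\<in>G. \<bar>h x\<bar> \<le> M) \<longrightarrow> (\<forall>x\<in>G. \<bar>A h x\<bar> \<le> C * M))"

lemma op_bound_on_mono: "op_bound_on G C A \<Longrightarrow> C \<le> D \<Longrightarrow> op_bound_on G D A"
  unfolding op_bound_on_def by (meson mult_right_mono order_trans)

lemma op_bound_on_comp:
  "op_bound_on G C A \<Longrightarrow> op_bound_on G D B \<Longrightarrow> 0 \<le> D \<Longrightarrow> op_bound_on G (C * D) (A \<circ> B)"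
  unfolding op_bound_on_def by (simp add: mult.assoc)

lemma E_minus_MP_op_bound:
  fixes \<alpha> w h a R :: real
  assumes \<xi>_inj: "inj_on (\<xi> k) {..k}"
    and "0 < h" "w \<le> R * h"
    and nodes: "\<forall>\<mu>\<le>k. a + h * \<xi> k \<mu> \<in> {\<alpha><..<\<alpha> + w}"
    and cf: "\<forall>s\<in>{\<alpha><..<\<alpha> + w}. cf s = 1"
  shows "op_bound_on {\<alpha><..<\<alpha> + w} (1 + lagrange_norm_bound \<xi> k R) (E_minus_MP \<xi> cf k h a)"
  unfolding op_bound_on_def
proof (intro allI impI ballI)
  fix g :: "real \<Rightarrow> real" and M t :: real
  assume "0 \<le> M" and g: "\<forall>s\<in>{\<alpha><..<\<alpha> + w}. \<bar>g s\<bar> \<le> M" and t: "t \<in> {\<alpha><..<\<alpha> + w}"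
  let ?P = "lagrange_interp (\<lambda>\<mu>. a + h * \<xi> k \<mu>) k g"
  have E: "E_minus_MP \<xi> cf k h a g t = g t - poly ?P t"
    using interp_poly_eq_lagrange_interp[where \<xi> = \<xi> and k = k, OF \<xi>_inj] \<open>0 < h\<close> cf t
    unfolding E_minus_MP_def by simp
  have "\<bar>poly ?P t\<bar> \<le> M * lagrange_norm_bound \<xi> k R"
    using nodes g t \<open>w \<le> R * h\<close>
    by (intro abs_poly_lagrange_interp_scaled_le[where \<xi> = \<xi> and k = k, OF \<xi>_inj \<open>0 < h\<close> \<open>0 \<le> M\<close>])
      (force simp: abs_le_iff)+
  moreover have "\<bar>g t\<bar> \<le> M"
    using g t by blast
  ultimately show "\<bar>E_minus_MP \<xi> cf k h a g t\<bar> \<le> (1 + lagrange_norm_bound \<xi> k R) * M"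
    unfolding E using abs_triangle_ineq4[of "g t" "poly ?P t"] by (simp add: algebra_simps)
qed

lemma mem_obox: "x \<in> obox a h \<longleftrightarrow> (\<forall>i. x$i \<in> {a$i<..<a$i + h$i})"
  by (simp add: obox_def)

lemma obox_subset_component:
  fixes a h b k :: "real^'n"
  assumes "obox a h \<subseteq> obox b k" "\<forall>i. 0 < h$i"
  shows "{a$i<..<a$i + h$i} \<subseteq> {b$i<..<b$i + k$i}"
proof
  fix s assume s: "s \<in> {a$i<..<a$i + h$i}"
  define p where "p = (\<chi> i'. if i' = i then s else a$i' + h$i' / 2)"
  have "p \<in> obox a h"
    using assms(2) s by (auto simp: mem_obox p_def)
  then have "p$i \<in> {b$i<..<b$i + k$i}"
    using assms(1) mem_obox by blast
  then show "s \<in> {b$i<..<b$i + k$i}"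
    by (simp add: p_def)
qed

lemma Vop_op_bound_obox:
  fixes y0 \<eta> :: "real^'n"
  assumes "op_bound_on {y0$j<..<y0$j + \<eta>$j} C T"
  shows "op_bound_on (obox y0 \<eta>) C (Vop j T)"
  unfolding op_bound_on_def
proof (intro allI impI ballI)
  fix h :: "real^'n \<Rightarrow> real" and M :: real and x
  assume "0 \<le> M" and h: "\<forall>x\<in>obox y0 \<eta>. \<bar>h x\<bar> \<le> M" and x: "x \<in> obox y0 \<eta>"
  have T: "\<forall>s\<in>{y0$j<..<y0$j + \<eta>$j}. \<bar>T g s\<bar> \<le> C * M"
    if "\<forall>s\<in>{y0$j<..<y0$j + \<eta>$j}. \<bar>g s\<bar> \<le> M" for g
    using assms \<open>0 \<le> M\<close> that unfolding op_bound_on_def by blast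
  have "\<forall>s\<in>{y0$j<..<y0$j + \<eta>$j}. \<bar>h (\<chi> i. if i = j then s else x$i)\<bar> \<le> M"
    using h x by (auto simp: mem_obox)
  then have "\<forall>s\<in>{y0$j<..<y0$j + \<eta>$j}. \<bar>T (\<lambda>s. h (\<chi> i. if i = j then s else x$i)) s\<bar> \<le> C * M"
    by (rule T)
  then show "\<bar>Vop j T h x\<bar> \<le> C * M"
    using x unfolding Vop_def mem_obox by blast
qed

lemma Vop_E_minus_MP_op_bound_obox:
  fixes x0 y0 X0 \<delta> \<eta> \<Delta> \<rho> \<sigma> :: "real^'n"
  assumes \<xi>_in: "\<And>\<mu>. \<mu> \<le> k \<Longrightarrow> 0 < \<xi> k \<mu> \<and> \<xi> k \<mu> < 1"
    and \<xi>_inj: "inj_on (\<xi> k) {..k}"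
    and \<sigma>: "\<forall>i. 0 < \<sigma>$i" and \<delta>: "\<forall>i. 0 < \<delta>$i" and \<eta>: "\<forall>i. 0 < \<eta>$i"
    and sub_x0: "obox x0 (cmul \<sigma> \<delta>) \<subseteq> obox y0 \<eta>"
    and sub_y0: "obox y0 \<eta> \<subseteq> obox y0 (cmul \<rho> \<delta>) \<inter> obox X0 \<Delta>"
    and cf: "\<forall>t. X0$j < t \<and> t < X0$j + \<Delta>$j \<longrightarrow> cf t = 1"
  shows "op_bound_on (obox y0 \<eta>) (1 + lagrange_norm_bound \<xi> k (\<rho>$j / \<sigma>$j))
           (Vop j (E_minus_MP \<xi> cf k (\<sigma>$j * \<delta>$j) (x0$j)))"
proof (intro Vop_op_bound_obox E_minus_MP_op_bound[where \<xi> = \<xi> and k = k, OF \<xi>_inj])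
  have "0 < \<sigma>$j * \<delta>$j"
    using \<sigma> \<delta> by simp
  then show "0 < \<sigma>$j * \<delta>$j" .
  have "\<forall>i. 0 < cmul \<sigma> \<delta> $ i"
    using \<sigma> \<delta> by (simp add: cmul_def)
  then have x0_in_y0: "{x0$j<..<x0$j + \<sigma>$j * \<delta>$j} \<subseteq> {y0$j<..<y0$j + \<eta>$j}"
    using obox_subset_component[OF sub_x0] by (simp add: cmul_def)
  have "x0$j + \<sigma>$j * \<delta>$j * \<xi> k \<mu> \<in> {x0$j<..<x0$j + \<sigma>$j * \<delta>$j}" if "\<mu> \<le> k" for \<mu>
    using \<xi>_in[OF that] \<open>0 < \<sigma>$j * \<delta>$j\<close> by (simp add: mult_less_cancel_left2)
  with x0_in_y0 show "\<forall>\<mu>\<le>k. x0$j + \<sigma>$j * \<delta>$j * \<xi> k \<mu> \<in> {y0$j<..<y0$j + \<eta>$j}"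
    by blast
  have "obox y0 \<eta> \<subseteq> obox y0 (cmul \<rho> \<delta>)"
    using sub_y0 by blast
  then have "{y0$j<..<y0$j + \<eta>$j} \<subseteq> {y0$j<..<y0$j + \<rho>$j * \<delta>$j}"
    using obox_subset_component[where b = y0 and k = "cmul \<rho> \<delta>" and i = j, OF _ \<eta>] by (simp add: cmul_def)
  then have "\<eta>$j \<le> \<rho>$j * \<delta>$j"
    using \<eta> by (subst (asm) greaterThanLessThan_subseteq_greaterThanLessThan) simp
  moreover have "\<sigma>$j \<noteq> 0"
    using \<sigma> by (metis less_irrefl)
  ultimately show "\<eta>$j \<le> \<rho>$j / \<sigma>$j * (\<sigma>$j * \<delta>$j)"
    by simp
  have "obox y0 \<eta> \<subseteq> obox X0 \<Delta>"
    using sub_y0 by blast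
  then have "{y0$j<..<y0$j + \<eta>$j} \<subseteq> {X0$j<..<X0$j + \<Delta>$j}"
    by (rule obox_subset_component[OF _ \<eta>])
  then show "\<forall>t\<in>{y0$j<..<y0$j + \<eta>$j}. cf t = 1"
    using cf by auto
qed

lemma foldr_Vop_op_bound:
  assumes "0 \<le> C" "\<forall>j\<in>set js. op_bound_on G C (Vop j (T j))"
  shows "op_bound_on G (C ^ length js) (foldr (\<lambda>j acc. Vop j (T j) \<circ> acc) js id)"
  using assms(2)
proof (induction js)
  case Nil
  show ?case
    by (simp add: op_bound_on_def)
next
  case (Cons j js)
  have "op_bound_on G (C ^ length js) (foldr (\<lambda>j acc. Vop j (T j) \<circ> acc) js id)"
    using Cons.prems by (intro Cons.IH) simp
  then have "op_bound_on G (C * C ^ length js) (Vop j (T j) \<circ> foldr (\<lambda>j acc. Vop j (T j) \<circ> acc) js id)"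
    using Cons.prems assms(1) by (intro op_bound_on_comp) auto
  then show ?case
    by (simp add: comp_def id_def)
qed

lemma Vprod_op_bound:
  fixes G :: "(real^'n) set"
  assumes "0 \<le> C" "\<forall>j\<in>J. op_bound_on G C (Vop j (T j))"
  shows "op_bound_on G (C ^ card J) (Vprod J T)"
proof -
  define js where "js = (SOME js. distinct js \<and> set js = J)"
  have js: "distinct js \<and> set js = J"
    unfolding js_def by (rule someI_ex) (use finite_distinct_list[of J] in auto)
  then have "op_bound_on G (C ^ length js) (foldr (\<lambda>j acc. Vop j (T j) \<circ> acc) js id)"
    using foldr_Vop_op_bound[OF assms(1), where G = G and T = T and js = js] assms(2) by simp
  moreover have "card J = length js"
    using js distinct_card by blast
  ultimately show ?thesis
    unfolding Vprod_def js_def[symmetric] by simp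
qed

lemma obox_ne_empty: "\<forall>i. 0 < h$i \<Longrightarrow> obox a h \<noteq> {}"
proof -
  assume "\<forall>i. 0 < h$i"
  then have "(\<chi> i. a$i + h$i / 2) \<in> obox a h"
    by (simp add: mem_obox)
  then show ?thesis
    by blast
qed

lemma supG_le_if_op_bound:
  assumes A: "op_bound_on G c A" and "G \<noteq> {}" "0 < c"
  shows "supG G (A f) \<le> ereal c * supG G f"
proof (cases "supG G f")
  case (real M)
  have "ereal \<bar>f x\<bar> \<le> supG G f" if "x \<in> G" for x
    unfolding supG_def using that by (rule SUP_upper)
  then have f: "\<forall>x\<in>G. \<bar>f x\<bar> \<le> M"
    using real by simp
  moreover have "0 \<le> M"
    using f \<open>G \<noteq> {}\<close> by force
  ultimately have "\<forall>x\<in>G. \<bar>A f x\<bar> \<le> c * M"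
    using A unfolding op_bound_on_def by blast
  then show ?thesis
    unfolding supG_def real[unfolded supG_def] by (simp add: SUP_least)
next
  case PInf
  then show ?thesis
    using \<open>0 < c\<close> by simp
next
  case MInf
  obtain x where "x \<in> G"
    using \<open>G \<noteq> {}\<close> by blast
  then have "ereal \<bar>f x\<bar> \<le> supG G f"
    unfolding supG_def by (rule SUP_upper)
  with MInf show ?thesis
    by simp
qed

theorem lemma2p1p6:
  fixes \<xi> :: "nat \<Rightarrow> nat \<Rightarrow> real"
    and l :: "nat^'n" and \<rho> \<sigma> :: "real^'n"
  assumes \<xi>_in: "\<And>k \<mu>. \<mu> \<le> k \<Longrightarrow> 0 < \<xi> k \<mu> \<and> \<xi> k \<mu> < 1"
    and \<xi>_dist: "\<And>k \<mu> \<nu>. \<mu> \<le> k \<Longrightarrow> \<nu> \<le> k \<Longrightarrow> \<mu> \<noteq> \<nu> \<Longrightarrow> \<xi> k \<mu> \<noteq> \<xi> k \<nu>"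
    and \<rho>_pos: "\<forall>i. 0 < \<rho>$i" and \<sigma>_pos: "\<forall>i. 0 < \<sigma>$i"
  shows "\<exists>c>0. \<forall>x0 y0 X0 \<delta> \<eta> \<Delta> :: real^'n.
    (\<forall>i. 0 < \<delta>$i) \<longrightarrow> (\<forall>i. 0 < \<eta>$i) \<longrightarrow> (\<forall>i. 0 < \<Delta>$i) \<longrightarrow>
    obox x0 (cmul \<sigma> \<delta>) \<subseteq> obox y0 \<eta> \<longrightarrow>
    obox y0 \<eta> \<subseteq> obox y0 (cmul \<rho> \<delta>) \<inter> obox X0 \<Delta> \<longrightarrow>
    (\<forall>(J :: 'n set) (cf :: 'n \<Rightarrow> real \<Rightarrow> real) f.
      (\<forall>j\<in>J. continuous_on UNIV (cf j) \<and> compact (closure {t. cf j t \<noteq> 0}) \<and>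
               (\<forall>t. X0$j < t \<and> t < X0$j + \<Delta>$j \<longrightarrow> cf j t = 1)) \<longrightarrow>
      f \<in> C0 \<longrightarrow>
      supG (obox y0 \<eta>)
        (Vprod J (\<lambda>j. E_minus_MP \<xi> (cf j) (l$j) (\<sigma>$j * \<delta>$j) (x0$j)) f)
      \<le> ereal c * supG (obox y0 \<eta>) f)"
proof -
  have \<xi>_inj: "inj_on (\<xi> k) {..k}" for k
    using \<xi>_dist by (meson atMost_iff inj_onI)
  define \<Lambda> where "\<Lambda> j = lagrange_norm_bound \<xi> (l$j) (\<rho>$j / \<sigma>$j)" for j
  define C where "C = 1 + (\<Sum>j\<in>UNIV. \<Lambda> j)"
  have "0 \<le> \<Lambda> j" for j
    unfolding \<Lambda>_def lagrange_norm_bound_def using \<rho>_pos \<sigma>_pos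
    by (intro sum_nonneg prod_nonneg divide_nonneg_nonneg) (auto simp: less_imp_le)
  then have C_ge: "1 + \<Lambda> j \<le> C" and "1 \<le> C" for j
    unfolding C_def by (simp_all add: member_le_sum sum_nonneg)
  show ?thesis
  proof (intro exI[of _ "C ^ CARD('n)"] conjI allI impI)
    show "0 < C ^ CARD('n)"
      using \<open>1 \<le> C\<close> by simp
    fix x0 y0 X0 \<delta> \<eta> \<Delta> :: "real^'n"
      and J :: "'n set" and cf :: "'n \<Rightarrow> real \<Rightarrow> real" and f :: "real^'n \<Rightarrow> real"
    assume \<delta>: "\<forall>i. 0 < \<delta>$i" and \<eta>: "\<forall>i. 0 < \<eta>$i" and "\<forall>i. 0 < \<Delta>$i"
      and sub_x0: "obox x0 (cmul \<sigma> \<delta>) \<subseteq> obox y0 \<eta>"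
      and sub_y0: "obox y0 \<eta> \<subseteq> obox y0 (cmul \<rho> \<delta>) \<inter> obox X0 \<Delta>"
      and cf: "\<forall>j\<in>J. continuous_on UNIV (cf j) \<and> compact (closure {t. cf j t \<noteq> 0}) \<and>
               (\<forall>t. X0$j < t \<and> t < X0$j + \<Delta>$j \<longrightarrow> cf j t = 1)"
    let ?T = "\<lambda>j. E_minus_MP \<xi> (cf j) (l$j) (\<sigma>$j * \<delta>$j) (x0$j)"
    have "op_bound_on (obox y0 \<eta>) C (Vop j (?T j))" if "j \<in> J" for j
      using Vop_E_minus_MP_op_bound_obox[where \<xi> = \<xi> and k = "l$j" and j = j and cf = "cf j",
          OF \<xi>_in \<xi>_inj \<sigma>_pos \<delta> \<eta> sub_x0 sub_y0]
        cf that C_ge op_bound_on_mono unfolding \<Lambda>_def by blast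
    then have "op_bound_on (obox y0 \<eta>) (C ^ card J) (Vprod J ?T)"
      using \<open>1 \<le> C\<close> by (intro Vprod_op_bound) auto
    then have "op_bound_on (obox y0 \<eta>) (C ^ CARD('n)) (Vprod J ?T)"
      using \<open>1 \<le> C\<close> by (elim op_bound_on_mono) (simp add: power_increasing card_mono)
    then show "supG (obox y0 \<eta>) (Vprod J ?T f) \<le> ereal (C ^ CARD('n)) * supG (obox y0 \<eta>) f"
      using \<open>1 \<le> C\<close> obox_ne_empty[OF \<eta>] by (intro supG_le_if_op_bound) auto
  qed
qed

end
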